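(* Let $X$ be a compact subset of $\mathbb{R}$ and $m$ an atom-free Borel probability measure on $X$. For all $p\ge1$, all $h:X\to\mathbb{C}$ and all $\varepsilon>0$, $$\int_X\mathrm{osc}(h,\varepsilon,x)^p\,dm(x)\le2\varepsilon\,\mathrm{Var}_p(h)^p.$$
   Context: $d(x,y)=m(\{z\in X:x\le z\le y\text{ or }y\le z\le x\})$, $B_d(x,\varepsilon)=\{y\in X:d(x,y)<\varepsilon\}$, $\mathrm{osc}(h,\varepsilon,x)=\operatorname{ess\,sup}_m\{|h(y)-h(y')|:y,y'\in B_d(x,\varepsilon)\}$. $\mathrm{Var}_p(h)=\sup\{(\sum_{i=1}^k|h(x_i)-h(x_{i-1})|^p)^{1/p}:k\ge1,\ x_0<x_1<\dots<x_k\text{ in }X\}$. *)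

theory Defs
  imports "HOL-Probability.Probability"
begin

definition epowr :: "ennreal \<Rightarrow> real \<Rightarrow> ennreal" where
  "epowr a p = (if a = top then top else ennreal (enn2real a powr p))"

definition mdist :: "real measure \<Rightarrow> real \<Rightarrow> real \<Rightarrow> real" where
  "mdist m x y = measure m {z \<in> space m. (x \<le> z \<and> z \<le> y) \<or> (y \<le> z \<and> z \<le> x)}"

definition dball :: "real measure \<Rightarrow> real \<Rightarrow> real \<Rightarrow> real set" where
  "dball m x e = {y \<in> space m. mdist m x y < e}"

text \<open>osc(h,e,x): essential supremum (w.r.t. m) of |h y - h y'| for y, y' in B_d(x,e),
  i.e. infimum over m-null sets N of the supremum over y, y' in B_d(x,e) - N.\<close>
definition osc :: "real measure \<Rightarrow> (real \<Rightarrow> complex) \<Rightarrow> real \<Rightarrow> real \<Rightarrow> ennreal" where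
  "osc m h e x = (INF N \<in> {N \<in> sets m. emeasure m N = 0}.
      SUP (y, y') \<in> (dball m x e - N) \<times> (dball m x e - N). ennreal (cmod (h y - h y')))"

definition pvar :: "real set \<Rightarrow> real \<Rightarrow> (real \<Rightarrow> complex) \<Rightarrow> ennreal" where
  "pvar X p h = (SUP (k, xs) \<in> {(k, xs). k \<ge> (1::nat) \<and> strict_mono_on {0..k} (xs :: nat \<Rightarrow> real)
        \<and> (\<forall>i\<le>k. xs i \<in> X)}.
      ennreal ((\<Sum>i=1..k. cmod (h (xs i) - h (xs (i - 1))) powr p) powr (1 / p)))"

end

theory Submission
  imports Defs
begin

text \<open>Let \<open>F\<close> be the distribution function of \<open>m\<close>. As \<open>m\<close> has no atoms, \<open>d(x, y) = |F x - F y|\<close>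
  and \<open>F\<close> pushes \<open>m\<close> forward to the uniform distribution on \<open>[0, 1]\<close> (probability integral
  transform). Hence \<open>osc(h, e, x)^p \<le> W (F x)\<close>, where \<open>W t\<close> is the supremum of \<open>|h y - h y'|^p\<close>
  over pairs \<open>y, y'\<close> with \<open>F\<close>-values in \<open>(t - e, t + e)\<close>, and the integral is at most the integral
  of \<open>W\<close> over \<open>[0, \<infinity>)\<close>. Cutting \<open>[0, \<infinity>)\<close> into intervals of length \<open>2e\<close> turns this into the
  integral over \<open>s \<in> [0, 2e)\<close> of \<open>\<Sum>\<^sub>n W (s + 2en)\<close>. For fixed \<open>s\<close> the windows around the points
  \<open>s + 2en\<close> are disjoint and increasing, so pairs chosen in them form one increasing chain in \<open>X\<close>,
  whence \<open>\<Sum>\<^sub>n W (s + 2en) \<le> Var\<^sub>p(h)^p\<close>.\<close>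

fun var_sum :: "(real \<Rightarrow> complex) \<Rightarrow> real \<Rightarrow> real list \<Rightarrow> real" where
  "var_sum h p (x # y # ys) = cmod (h y - h x) powr p + var_sum h p (y # ys)"
| "var_sum h p _ = 0"

lemma var_sum_nonneg: "var_sum h p xs \<ge> 0"
  by (induction h p xs rule: var_sum.induct) auto

lemma var_sum_Cons_ge: "var_sum h p (x # xs) \<ge> var_sum h p xs"
  by (cases xs) auto

lemma var_sum_append_ge: "var_sum h p (xs @ ys) \<ge> var_sum h p xs + var_sum h p ys"
  by (induction h p xs rule: var_sum.induct) (auto simp: var_sum_Cons_ge)

lemma var_sum_concat_ge: "var_sum h p (concat xss) \<ge> (\<Sum>xs\<leftarrow>xss. var_sum h p xs)"
proof (induction xss)
  case (Cons xs xss)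
  then show ?case
    using var_sum_append_ge[of h p xs "concat xss"] by simp
qed simp

lemma var_sum_eq_sum:
  "var_sum h p xs = (\<Sum>i=1..length xs - 1. cmod (h (xs ! i) - h (xs ! (i - 1))) powr p)"
proof (induction h p xs rule: var_sum.induct)
  case (1 h p x y ys)
  let ?d = "\<lambda>zs i. cmod (h (zs ! i) - h (zs ! (i - 1))) powr p"
  have "(\<Sum>i=1..Suc (length ys). ?d (x # y # ys) i)
      = ?d (x # y # ys) 1 + (\<Sum>i=Suc 1..Suc (length ys). ?d (x # y # ys) i)"
    by (subst sum.atLeast_Suc_atMost) auto
  also have "(\<Sum>i=Suc 1..Suc (length ys). ?d (x # y # ys) i) = (\<Sum>i=1..length ys. ?d (y # ys) i)"
    by (subst sum.shift_bounds_cl_Suc_ivl) (auto intro!: sum.cong simp: nth_Cons split: nat.splits)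
  finally show ?case using 1 by simp
qed auto

lemma epowr_ennreal: "x \<ge> 0 \<Longrightarrow> epowr (ennreal x) p = ennreal (x powr p)"
  by (simp add: epowr_def)

lemma epowr_mono:
  assumes "a \<le> b" "p \<ge> 0"
  shows "epowr a p \<le> epowr b p"
proof (cases "b = top")
  case False
  then have "a \<noteq> top" "enn2real a \<le> enn2real b"
    using assms(1) by (auto simp: top_unique enn2real_mono less_top)
  then show ?thesis
    using False assms(2) unfolding epowr_def by (simp add: ennreal_leI powr_mono2)
qed (simp add: epowr_def)

lemma epowr_SUP_le:
  fixes r :: "'b \<Rightarrow> real"
  assumes r: "\<And>i. r i \<ge> 0" and p: "p > 0"
  shows "epowr (SUP i. ennreal (r i)) p \<le> (SUP i. ennreal (r i powr p))"
proof (cases "(SUP i. ennreal (r i powr p)) = top")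
  case False
  then obtain \<tau> where \<tau>: "(SUP i. ennreal (r i powr p)) = ennreal \<tau>" "\<tau> \<ge> 0"
    by (metis enn2real_nonneg ennreal_enn2real_if)
  have "r i \<le> \<tau> powr (1/p)" for i
  proof -
    have "ennreal (r i powr p) \<le> ennreal \<tau>"
      unfolding \<tau>(1)[symmetric] by (rule SUP_upper) simp
    then have "(r i powr p) powr (1/p) \<le> \<tau> powr (1/p)"
      using p \<tau>(2) by (intro powr_mono2) (auto simp: ennreal_le_iff)
    then show ?thesis using p r[of i] by (simp add: powr_powr)
  qed
  then have "epowr (SUP i. ennreal (r i)) p \<le> epowr (ennreal (\<tau> powr (1/p))) p"
    using p by (intro epowr_mono SUP_least) (auto intro: ennreal_leI)
  also have "\<dots> = ennreal \<tau>"
    using p \<tau>(2) by (simp add: epowr_ennreal powr_powr)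
  finally show ?thesis unfolding \<tau>(1) .
qed (simp only: top_greatest)

lemma var_sum_le_pvar:
  assumes "sorted_wrt (<) xs" "set xs \<subseteq> X" "p \<ge> 1"
  shows "ennreal (var_sum h p xs) \<le> epowr (pvar X p h) p"
proof (cases "length xs \<ge> 2")
  case False
  then show ?thesis by (simp add: var_sum_eq_sum)
next
  case True
  define k where "k = length xs - 1"
  have "strict_mono_on {0..k} ((!) xs)"
    using assms(1) True by (intro strict_mono_onI) (simp add: sorted_wrt_iff_nth_less k_def)
  moreover have "\<forall>i\<le>k. xs ! i \<in> X"
    using assms(2) True by (auto simp: k_def)
  ultimately have "ennreal (var_sum h p xs powr (1/p)) \<le> pvar X p h"
    unfolding pvar_def var_sum_eq_sum k_def[symmetric]
    by (intro SUP_upper2[of "(k, (!) xs)"]) (use True in \<open>auto simp: k_def\<close>)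
  then have "epowr (ennreal (var_sum h p xs powr (1/p))) p \<le> epowr (pvar X p h) p"
    using assms(3) by (intro epowr_mono) auto
  then show ?thesis
    using assms(3) var_sum_nonneg[of h p xs] by (simp add: epowr_ennreal powr_powr)
qed

text \<open>Pairs outside the window \<open>(t - e, t + e)\<close> get gap 0, so that suprema can range over all pairs.\<close>

definition window_gap ::
    "(real \<Rightarrow> real) \<Rightarrow> real set \<Rightarrow> (real \<Rightarrow> complex) \<Rightarrow> real \<Rightarrow> real \<Rightarrow> real \<times> real \<Rightarrow> real" where
  "window_gap F X h e t q =
    (if fst q \<in> X \<and> snd q \<in> X \<and> \<bar>F (fst q) - t\<bar> < e \<and> \<bar>F (snd q) - t\<bar> < e
     then cmod (h (fst q) - h (snd q)) else 0)"

definition window_osc ::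
    "(real \<Rightarrow> real) \<Rightarrow> real set \<Rightarrow> (real \<Rightarrow> complex) \<Rightarrow> real \<Rightarrow> real \<Rightarrow> real \<Rightarrow> ennreal" where
  "window_osc F X h p e t = (SUP q. ennreal (window_gap F X h e t q powr p))"

definition window_chain ::
    "(real \<Rightarrow> real) \<Rightarrow> real set \<Rightarrow> (real \<Rightarrow> complex) \<Rightarrow> real \<Rightarrow> real \<Rightarrow> real \<times> real \<Rightarrow> real list" where
  "window_chain F X h e t q =
    (if window_gap F X h e t q = 0 then [] else [min (fst q) (snd q), max (fst q) (snd q)])"

lemma window_gap_nonneg: "window_gap F X h e t q \<ge> 0"
  by (simp add: window_gap_def)

lemma var_sum_window_chain: "var_sum h p (window_chain F X h e t q) = window_gap F X h e t q powr p"
  by (cases "fst q \<le> snd q")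
     (auto simp: window_chain_def window_gap_def min_def max_def norm_minus_commute)

lemma window_chain_mem:
  assumes "z \<in> set (window_chain F X h e t q)"
  shows "z \<in> X" "\<bar>F z - t\<bar> < e"
  using assms by (auto simp: window_chain_def window_gap_def min_def max_def split: if_splits)

lemma sorted_window_chain: "sorted_wrt (<) (window_chain F X h e t q)"
  by (auto simp: window_chain_def window_gap_def min_def max_def less_le split: if_splits)

lemma sorted_wrt_concat_map_upt:
  assumes "\<And>n. n < N \<Longrightarrow> sorted_wrt P (xs n)"
    and "\<And>i j x y. i < j \<Longrightarrow> j < N \<Longrightarrow> x \<in> set (xs i) \<Longrightarrow> y \<in> set (xs j) \<Longrightarrow> P x y"
  shows "sorted_wrt P (concat (map xs [0..<N]))"
  using assms by (induction N) (auto simp: sorted_wrt_append)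

lemma sum_window_gaps_le_pvar:
  assumes F: "mono F" and e: "e > 0" and p: "p \<ge> 1"
  shows "ennreal (\<Sum>n<N. window_gap F X h e (s + 2 * e * real n) (c n) powr p)
           \<le> epowr (pvar X p h) p"
proof -
  define xs where "xs n = window_chain F X h e (s + 2 * e * real n) (c n)" for n
  have "(\<Sum>n<N. window_gap F X h e (s + 2 * e * real n) (c n) powr p)
      \<le> var_sum h p (concat (map xs [0..<N]))"
  proof -
    have "(\<Sum>ys\<leftarrow>map xs [0..<N]. var_sum h p ys) = (\<Sum>n<N. var_sum h p (xs n))"
      by (simp add: interv_sum_list_conv_sum_set_nat atLeast0LessThan)
    then show ?thesis
      using var_sum_concat_ge[of h p "map xs [0..<N]"] by (simp add: xs_def var_sum_window_chain)
  qed
  then have "ennreal (\<Sum>n<N. window_gap F X h e (s + 2 * e * real n) (c n) powr p)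
      \<le> ennreal (var_sum h p (concat (map xs [0..<N])))"
    by (rule ennreal_leI)
  also have "\<dots> \<le> epowr (pvar X p h) p"
  proof (rule var_sum_le_pvar[OF _ _ p])
    show "sorted_wrt (<) (concat (map xs [0..<N]))"
    proof (rule sorted_wrt_concat_map_upt)
      fix i j y z assume ij: "i < j" and "y \<in> set (xs i)" "z \<in> set (xs j)"
      then have "F y < s + 2 * e * real i + e" "s + 2 * e * real j - e < F z"
        using window_chain_mem(2) unfolding xs_def by fastforce+
      moreover have "2 * e * (real i + 1) \<le> 2 * e * real j"
        using ij e by (intro mult_left_mono) auto
      ultimately have "F y < F z"
        by (simp add: algebra_simps)
      then show "y < z"
        using monoD[OF F, of z y] by (cases "y < z") auto
    qed (simp add: xs_def sorted_window_chain)
    show "set (concat (map xs [0..<N])) \<subseteq> X"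
      unfolding xs_def by (auto dest: window_chain_mem(1))
  qed
  finally show ?thesis .
qed

lemma sum_SUP_le_SUP_sum:
  fixes f :: "nat \<Rightarrow> 'b \<Rightarrow> ennreal"
  shows "(\<Sum>n<N. SUP q. f n q) \<le> (SUP c. \<Sum>n<N. f n (c n))"
proof (induction N)
  case (Suc N)
  have "(\<Sum>n<Suc N. SUP q. f n q) \<le> (SUP c. \<Sum>n<N. f n (c n)) + (SUP q. f N q)"
    using Suc by (simp add: add_right_mono)
  also have "\<dots> = (SUP q. SUP c. (\<Sum>n<N. f n (c n)) + f N q)"
    by (simp add: ennreal_SUP_add_left[symmetric] ennreal_SUP_add_right)
  also have "\<dots> = (SUP c. SUP q. (\<Sum>n<N. f n (c n)) + f N q)"
    by (rule SUP_commute)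
  also have "\<dots> \<le> (SUP c. \<Sum>n<Suc N. f n (c n))"
  proof (intro SUP_least)
    fix c q
    have "(\<Sum>n<N. f n (c n)) + f N q = (\<Sum>n<Suc N. f n ((c(N := q)) n))"
      by simp
    also have "\<dots> \<le> (SUP c. \<Sum>n<Suc N. f n (c n))"
      by (rule SUP_upper) simp
    finally show "(\<Sum>n<N. f n (c n)) + f N q \<le> (SUP c. \<Sum>n<Suc N. f n (c n))" .
  qed
  finally show ?case .
qed simp

lemma sum_window_osc_le_pvar:
  assumes "mono F" "e > 0" "p \<ge> 1"
  shows "(\<Sum>n<N. window_osc F X h p e (s + 2 * e * real n)) \<le> epowr (pvar X p h) p"
proof -
  have "(\<Sum>n<N. window_osc F X h p e (s + 2 * e * real n))
      \<le> (SUP c. \<Sum>n<N. ennreal (window_gap F X h e (s + 2 * e * real n) (c n) powr p))"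
    unfolding window_osc_def by (rule sum_SUP_le_SUP_sum)
  also have "\<dots> \<le> epowr (pvar X p h) p"
  proof (rule SUP_least)
    fix c :: "nat \<Rightarrow> real \<times> real"
    have "(\<Sum>n<N. ennreal (window_gap F X h e (s + 2 * e * real n) (c n) powr p))
        = ennreal (\<Sum>n<N. window_gap F X h e (s + 2 * e * real n) (c n) powr p)"
      by (rule sum_ennreal) simp
    also have "\<dots> \<le> epowr (pvar X p h) p"
      by (rule sum_window_gaps_le_pvar[OF assms])
    finally show "(\<Sum>n<N. ennreal (window_gap F X h e (s + 2 * e * real n) (c n) powr p))
        \<le> epowr (pvar X p h) p" .
  qed
  finally show ?thesis .
qed

text \<open>Each superlevel set of \<open>window_osc\<close> is a union of open intervals.\<close>

lemma borel_measurable_window_osc[measurable]: "window_osc F X h p e \<in> borel_measurable borel"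
proof (rule borel_measurableI_greater)
  fix y :: ennreal
  define Q where "Q = {q. fst q \<in> X \<and> snd q \<in> X \<and> y < ennreal (cmod (h (fst q) - h (snd q)) powr p)}"
  have "{t \<in> space borel. y < window_osc F X h p e t} =
      (\<Union>q\<in>Q. ball (F (fst q)) e \<inter> ball (F (snd q)) e)"
    unfolding window_osc_def less_SUP_iff window_gap_def Q_def
    by (auto simp: dist_real_def split: if_splits) blast+
  then show "{t \<in> space borel. y < window_osc F X h p e t} \<in> sets borel"
    by (auto intro!: borel_open)
qed

lemma mem_atLeastLessThan_mult_iff_floor:
  fixes \<delta> t :: real
  assumes \<delta>: "\<delta> > 0"
  shows "t \<in> {\<delta> * real n ..< \<delta> * real n + \<delta>} \<longleftrightarrow> 0 \<le> t \<and> nat \<lfloor>t / \<delta>\<rfloor> = n"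
proof -
  have "t \<in> {\<delta> * real n ..< \<delta> * real n + \<delta>} \<longleftrightarrow> real n \<le> t / \<delta> \<and> t / \<delta> < real n + 1"
    using \<delta> by (simp add: field_simps)
  also have "\<dots> \<longleftrightarrow> \<lfloor>t / \<delta>\<rfloor> = int n"
    by (simp add: floor_eq_iff)
  also have "\<dots> \<longleftrightarrow> 0 \<le> t \<and> nat \<lfloor>t / \<delta>\<rfloor> = n"
  proof
    assume fl: "\<lfloor>t / \<delta>\<rfloor> = int n"
    then have "0 \<le> t / \<delta>"
      by (metis of_nat_0_le_iff zero_le_floor)
    with fl \<delta> show "0 \<le> t \<and> nat \<lfloor>t / \<delta>\<rfloor> = n"
      by (simp add: zero_le_divide_iff)
  qed (use \<delta> in auto)
  finally show ?thesis .
qed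

lemma nn_integral_halfline_le:
  fixes H :: "real \<Rightarrow> ennreal"
  assumes [measurable]: "H \<in> borel_measurable borel" and \<delta>: "\<delta> > 0"
    and sums: "\<And>s. 0 \<le> s \<Longrightarrow> s < \<delta> \<Longrightarrow> (\<Sum>n. H (s + \<delta> * real n)) \<le> V"
  shows "(\<integral>\<^sup>+t. H t * indicator {0..} t \<partial>lborel) \<le> ennreal \<delta> * V"
proof -
  define A where "A n = {\<delta> * real n ..< \<delta> * real n + \<delta>}" for n
  have A_iff: "t \<in> A n \<longleftrightarrow> 0 \<le> t \<and> nat \<lfloor>t / \<delta>\<rfloor> = n" for t n
    unfolding A_def using \<delta> by (rule mem_atLeastLessThan_mult_iff_floor)
  have "disjoint_family A"
    by (auto simp: disjoint_family_on_def A_iff)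
  moreover have "(\<Union>n. A n) = {0..}"
    by (auto simp: A_iff)
  ultimately have split: "H t * indicator {0..} t = (\<Sum>n. H t * indicator (A n) t)" for t
    using suminf_indicator[of A t] by (simp add: ennreal_suminf_cmult)
  have shift: "(\<integral>\<^sup>+t. H t * indicator (A n) t \<partial>lborel)
      = (\<integral>\<^sup>+s. H (s + \<delta> * real n) * indicator {0..<\<delta>} s \<partial>lborel)" for n
    using nn_integral_real_affine[of "\<lambda>t. H t * indicator (A n) t" 1 "\<delta> * real n"]
    by (simp add: A_def add.commute indicator_def)
  have "(\<integral>\<^sup>+t. H t * indicator {0..} t \<partial>lborel) = (\<Sum>n. \<integral>\<^sup>+t. H t * indicator (A n) t \<partial>lborel)"
    unfolding split by (rule nn_integral_suminf) (simp add: A_def)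
  also have "\<dots> = (\<integral>\<^sup>+s. (\<Sum>n. H (s + \<delta> * real n) * indicator {0..<\<delta>} s) \<partial>lborel)"
    unfolding shift by (rule nn_integral_suminf[symmetric]) simp
  also have "\<dots> = (\<integral>\<^sup>+s. (\<Sum>n. H (s + \<delta> * real n)) * indicator {0..<\<delta>} s \<partial>lborel)"
    by (simp add: ennreal_suminf_multc)
  also have "\<dots> \<le> (\<integral>\<^sup>+s. V * indicator {0..<\<delta>} s \<partial>lborel)"
    using sums by (intro nn_integral_mono) (simp add: mult_right_mono split: split_indicator)
  also have "\<dots> = ennreal \<delta> * V"
    using \<delta> by (simp add: nn_integral_cmult_indicator mult.commute)
  finally show ?thesis .
qed

lemma nn_integral_window_osc_le:
  assumes "mono F" "e > 0" "p \<ge> 1"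
  shows "(\<integral>\<^sup>+t. window_osc F X h p e t * indicator {0..} t \<partial>lborel)
           \<le> ennreal (2 * e) * epowr (pvar X p h) p"
proof (rule nn_integral_halfline_le)
  fix s :: real
  show "(\<Sum>n. window_osc F X h p e (s + 2 * e * real n)) \<le> epowr (pvar X p h) p"
    unfolding suminf_eq_SUP using sum_window_osc_le_pvar[OF assms] by (rule SUP_least)
qed (use assms in auto)

lemma (in real_distribution) cdf_sublevel_eq_atMost:
  assumes atomless: "\<And>x. measure M {x} = 0" and t: "t < 1" and ne: "{x. cdf M x \<le> t} \<noteq> {}"
  obtains c where "{x. cdf M x \<le> t} = {..c}" "cdf M c = t"
proof -
  let ?S = "{x. cdf M x \<le> t}"
  have "closed ?S"
    using atomless by (intro closed_Collect_le continuous_on_const)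
      (simp_all add: continuous_at_imp_continuous_on isCont_cdf)
  obtain b where b: "\<And>x. b \<le> x \<Longrightarrow> t < cdf M x"
    using order_tendstoD(1)[OF cdf_lim_at_top_prob t] by (auto simp: eventually_at_top_linorder)
  have bdd: "bdd_above ?S"
  proof (rule bdd_aboveI)
    fix x assume "x \<in> ?S"
    then show "x \<le> b" using b[of x] by fastforce
  qed
  define c where "c = Sup ?S"
  have "c \<in> ?S"
    unfolding c_def using ne bdd \<open>closed ?S\<close> by (rule closed_contains_Sup)
  have S_eq: "?S = {..c}"
    using cSup_upper[OF _ bdd] \<open>c \<in> ?S\<close> cdf_nondecreasing by (auto simp: c_def intro: order_trans)
  moreover have "cdf M c = t"
  proof (rule ccontr)
    assume "cdf M c \<noteq> t"
    with \<open>c \<in> ?S\<close> have "cdf M c < t" by simp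
    then have "eventually (\<lambda>x. cdf M x < t) (at_right c)"
      using cdf_is_right_cont[of c] by (auto simp: continuous_within dest: order_tendstoD(2))
    then obtain b' where "c < b'" "\<And>x. c < x \<Longrightarrow> x < b' \<Longrightarrow> cdf M x < t"
      by (auto simp: eventually_at_right_field)
    moreover have "c < (c + b') / 2" "(c + b') / 2 < b'"
      using \<open>c < b'\<close> by simp_all
    ultimately have "(c + b') / 2 \<in> ?S" by (simp add: less_imp_le)
    with \<open>c < b'\<close> show False unfolding S_eq by simp
  qed
  ultimately show ?thesis by (rule that)
qed

lemma (in real_distribution) measure_cdf_le:
  assumes atomless: "\<And>x. measure M {x} = 0" and t: "0 \<le> t" "t < 1"
  shows "measure M {x. cdf M x \<le> t} = t"
proof (cases "{x. cdf M x \<le> t} = {}")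
  case True
  have "t = 0"
  proof (rule ccontr)
    assume "t \<noteq> 0"
    then obtain a where "cdf M a < t"
      using t order_tendstoD(2)[OF cdf_lim_at_bot, of t] by (auto simp: eventually_at_bot_linorder)
    with True show False by (auto dest: less_imp_le)
  qed
  with True show ?thesis by simp
next
  case False
  with atomless t(2) obtain c where "{x. cdf M x \<le> t} = {..c}" "cdf M c = t"
    by (rule cdf_sublevel_eq_atMost)
  then show ?thesis by (simp add: cdf_def)
qed

lemma (in real_distribution) measure_cdf_le_eq_uniform:
  assumes atomless: "\<And>x. measure M {x} = 0"
  shows "measure M {x. cdf M x \<le> t} = measure lborel ({0..1} \<inter> {..t})"
proof (cases "t < 0" "t < 1" rule: case_split[case_product case_split])
  case True_True
  then have "{x. cdf M x \<le> t} = {}" using cdf_nonneg by (auto simp: not_le intro: less_le_trans)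
  with True_True show ?thesis by simp
next
  case False_True
  then have "{0..1} \<inter> {..t} = {0..t}" by auto
  with False_True show ?thesis by (simp add: measure_cdf_le atomless)
next
  case False_False
  then have "{x. cdf M x \<le> t} = space M"
    using cdf_bounded_prob by (auto intro: order_trans[of _ 1])
  moreover have "{0..1} \<inter> {..t} = {0..1::real}" using False_False by auto
  ultimately show ?thesis using prob_space by simp
qed simp

lemma (in real_distribution) distr_cdf_eq_uniform:
  assumes atomless: "\<And>x. measure M {x} = 0"
  shows "distr M borel (cdf M) = uniform_measure lborel {0..1}"
proof (rule cdf_unique)
  have [measurable]: "cdf M \<in> borel_measurable borel"
    by (intro borel_measurable_mono monoI cdf_nondecreasing)
  have cdf_random_variable: "cdf M \<in> measurable M borel"
    by measurable
  then show "real_distribution (distr M borel (cdf M))"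
    by (rule real_distribution_distr)
  have "prob_space (uniform_measure lborel {0..1::real})"
    by (intro prob_space_uniform_measure) simp_all
  then show "real_distribution (uniform_measure lborel {0..1::real})"
    by (simp add: real_distribution_def real_distribution_axioms_def)
  show "cdf (distr M borel (cdf M)) = cdf (uniform_measure lborel {0..1})"
  proof
    fix t :: real
    have "cdf M -` {..t} \<inter> space M = {x. cdf M x \<le> t}"
      by auto
    then have "cdf (distr M borel (cdf M)) t = measure M {x. cdf M x \<le> t}"
      unfolding cdf_def[of "distr M borel (cdf M)"] using cdf_random_variable by (simp add: measure_distr)
    also have "\<dots> = measure lborel ({0..1} \<inter> {..t})"
      using atomless by (rule measure_cdf_le_eq_uniform)
    also have "\<dots> = cdf (uniform_measure lborel {0..1}) t"
      by (simp add: cdf_def)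
    finally show "cdf (distr M borel (cdf M)) t = cdf (uniform_measure lborel {0..1}) t" .
  qed
qed

lemma (in finite_borel_measure) measure_Icc_eq_cdf:
  assumes "measure M {a} = 0" "a \<le> b"
  shows "measure M {a..b} = cdf M b - cdf M a"
proof -
  have "cdf M b = measure M ({..<a} \<union> {a..b})"
    using assms(2) by (simp add: cdf_def ivl_disj_un)
  also have "\<dots> = measure M {..<a} + measure M {a..b}"
    by (rule finite_measure_Union) auto
  finally have b: "cdf M b = measure M {..<a} + measure M {a..b}" .
  have "{..<a} \<union> {a} = {..a}" by auto
  then have "cdf M a = measure M ({..<a} \<union> {a})"
    by (simp add: cdf_def)
  also have "\<dots> = measure M {..<a}"
    using assms(1) by (subst finite_measure_Union) auto
  finally show ?thesis using b by simp
qed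

locale atomless_prob_on = prob_space m for m :: "real measure" +
  fixes X :: "real set"
  assumes sets_eq_restrict_borel: "sets m = sets (restrict_space borel X)"
    and emeasure_singleton: "x \<in> X \<Longrightarrow> emeasure m {x} = 0"
begin

text \<open>\<open>m\<close> as a Borel measure on the whole line, so that it has a distribution function.\<close>

definition law :: "real measure" where
  "law = distr m borel (\<lambda>x. x)"

lemma space_eq: "space m = X"
  using sets_eq_imp_space_eq[OF sets_eq_restrict_borel] by (simp add: space_restrict_space)

lemma id_measurable: "(\<lambda>x. x) \<in> measurable m borel"
  by (simp add: measurable_cong_sets[OF sets_eq_restrict_borel refl] measurable_restrict_space1)

lemma real_distribution_law: "real_distribution law"
  unfolding law_def using id_measurable by (rule real_distribution_distr)

lemma nn_integral_law: "f \<in> borel_measurable borel \<Longrightarrow> (\<integral>\<^sup>+x. f x \<partial>law) = (\<integral>\<^sup>+x. f x \<partial>m)"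
  unfolding law_def using id_measurable by (simp add: nn_integral_distr)

lemma measure_law: "A \<in> sets borel \<Longrightarrow> measure law A = measure m (A \<inter> X)"
  unfolding law_def using id_measurable by (simp add: measure_distr space_eq)

lemma measure_law_singleton: "measure law {x} = 0"
proof (cases "x \<in> X")
  case True
  then have "measure law {x} = measure m {x}"
    by (simp add: measure_law)
  with True show ?thesis
    using emeasure_singleton by (simp add: measure_def)
qed (simp add: measure_law)

lemma mdist_eq_cdf: "mdist m x y = \<bar>cdf law x - cdf law y\<bar>"
proof -
  have "{z \<in> space m. (x \<le> z \<and> z \<le> y) \<or> (y \<le> z \<and> z \<le> x)} = {min x y..max x y} \<inter> X"
    by (auto simp: space_eq)
  then have "mdist m x y = measure law {min x y..max x y}"
    by (simp add: mdist_def measure_law)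
  also have "\<dots> = cdf law (max x y) - cdf law (min x y)"
    using real_distribution.finite_borel_measure_M[OF real_distribution_law]
    by (rule finite_borel_measure.measure_Icc_eq_cdf) (simp_all add: measure_law_singleton)
  also have "\<dots> = \<bar>cdf law x - cdf law y\<bar>"
    using finite_borel_measure.cdf_nondecreasing
      [OF real_distribution.finite_borel_measure_M[OF real_distribution_law]]
    by (cases "x \<le> y") (auto simp: min_def max_def)
  finally show ?thesis .
qed

lemma dball_eq: "dball m x e = {y \<in> X. \<bar>cdf law y - cdf law x\<bar> < e}"
  by (auto simp: dball_def mdist_eq_cdf space_eq abs_minus_commute)

lemma osc_le_window_osc:
  assumes p: "p \<ge> 1"
  shows "epowr (osc m h e x) p \<le> window_osc (cdf law) X h p e (cdf law x)"
proof -
  let ?gap = "window_gap (cdf law) X h e (cdf law x)"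
  have "osc m h e x \<le> (SUP (y, y') \<in> dball m x e \<times> dball m x e. ennreal (cmod (h y - h y')))"
    unfolding osc_def by (rule INF_lower2[of "{}"]) auto
  also have "\<dots> \<le> (SUP q. ennreal (?gap q))"
  proof (rule SUP_least)
    fix q assume "q \<in> dball m x e \<times> dball m x e"
    then have "(case q of (y, y') \<Rightarrow> ennreal (cmod (h y - h y'))) = ennreal (?gap q)"
      by (auto simp: dball_eq window_gap_def)
    also have "\<dots> \<le> (SUP q. ennreal (?gap q))"
      by (rule SUP_upper) simp
    finally show "(case q of (y, y') \<Rightarrow> ennreal (cmod (h y - h y'))) \<le> (SUP q. ennreal (?gap q))" .
  qed
  finally have "epowr (osc m h e x) p \<le> epowr (SUP q. ennreal (?gap q)) p"
    using p by (intro epowr_mono) auto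
  also have "\<dots> \<le> window_osc (cdf law) X h p e (cdf law x)"
    unfolding window_osc_def using p by (intro epowr_SUP_le window_gap_nonneg) auto
  finally show ?thesis .
qed

lemma nn_integral_osc_le:
  assumes p: "p \<ge> 1" and e: "e > 0"
  shows "(\<integral>\<^sup>+x. epowr (osc m h e x) p \<partial>m) \<le> ennreal (2 * e) * epowr (pvar X p h) p"
proof -
  let ?F = "cdf law" and ?W = "window_osc (cdf law) X h p e"
  have F_mono: "mono ?F"
    by (intro monoI finite_borel_measure.cdf_nondecreasing
        real_distribution.finite_borel_measure_M[OF real_distribution_law])
  have [measurable]: "?F \<in> borel_measurable borel"
    using F_mono by (rule borel_measurable_mono)
  have "(\<integral>\<^sup>+x. epowr (osc m h e x) p \<partial>m) \<le> (\<integral>\<^sup>+x. ?W (?F x) \<partial>m)"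
    by (intro nn_integral_mono osc_le_window_osc p)
  also have "\<dots> = (\<integral>\<^sup>+x. ?W (?F x) \<partial>law)"
    by (rule nn_integral_law[symmetric]) measurable
  also have "\<dots> = (\<integral>\<^sup>+t. ?W t \<partial>distr law borel ?F)"
    by (rule nn_integral_distr[symmetric])
       (simp_all add: measurable_cong_sets[OF real_distribution.events_eq_borel[OF real_distribution_law] refl])
  also have "distr law borel ?F = uniform_measure lborel {0..1}"
    using real_distribution_law measure_law_singleton by (rule real_distribution.distr_cdf_eq_uniform)
  also have "(\<integral>\<^sup>+t. ?W t \<partial>uniform_measure lborel {0..1}) = (\<integral>\<^sup>+t. ?W t * indicator {0..1} t \<partial>lborel)"
    by (simp add: nn_integral_uniform_measure divide_ennreal_def)
  also have "\<dots> \<le> (\<integral>\<^sup>+t. ?W t * indicator {0..} t \<partial>lborel)"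
    by (intro nn_integral_mono mult_left_mono) (auto split: split_indicator)
  also have "\<dots> \<le> ennreal (2 * e) * epowr (pvar X p h) p"
    using F_mono e p by (rule nn_integral_window_osc_le)
  finally show ?thesis .
qed

end

theorem lemma4p2:
  fixes X :: "real set" and m :: "real measure" and p e :: real and h :: "real \<Rightarrow> complex"
  assumes "compact X"
    and "sets m = sets (restrict_space borel X)"
    and "prob_space m"
    and "\<And>x. x \<in> X \<Longrightarrow> emeasure m {x} = 0"
    and "p \<ge> 1"
    and "e > 0"
  shows "(\<integral>\<^sup>+ x. epowr (osc m h e x) p \<partial>m) \<le> ennreal (2 * e) * epowr (pvar X p h) p"
proof -
  interpret atomless_prob_on m X
    using assms(2-4) by (simp add: atomless_prob_on_def atomless_prob_on_axioms_def)
  show ?thesis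
    using assms(5,6) by (rule nn_integral_osc_le)
qed

end
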